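(* Let $a$ and $b$ be positive integers. There exists a graph $G$ with $\gamma^{LD}(G)=a$ and $\gamma^{DLD}(G)=b$ if and only if $$0\le b-a\le 2^a-1-\binom{a}{\lceil a/2\rceil}.$$
   Context: Graphs are finite, simple and undirected, and need not be connected. For a vertex $u$, $N(u)$ is its set of neighbours and $N[u]=N(u)\cup\{u\}$. A code is a non-empty subset $C$ of the vertex set $V$; $I(C;u)=N[u]\cap C$. A code $C$ is locating-dominating if for all distinct $u,v\in V\setminus C$ we have $I(C;u)\neq\emptyset$ and $I(C;u)\ne I(C;v)$. A code $C$ is solid-locating-dominating if $I(C;u)\ne\emptyset$ for every $u\in V\setminus C$ and $I(C;u)\not\subseteq I(C;v)$ for all distinct $u,v\in V\setminus C$. $\gamma^{LD}(G)$ and $\gamma^{DLD}(G)$ are the minimum sizes of a locating-dominating and a solid-locating-dominating code in $G$. *)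

theory Defs
  imports Main
begin

definition simple_graph :: "'a set \<Rightarrow> ('a \<Rightarrow> 'a \<Rightarrow> bool) \<Rightarrow> bool" where
  "simple_graph V E \<longleftrightarrow> finite V \<and> (\<forall>u v. E u v \<longrightarrow> u \<in> V \<and> v \<in> V)
     \<and> (\<forall>u v. E u v \<longrightarrow> E v u) \<and> (\<forall>u. \<not> E u u)"

definition closed_nbhd :: "'a set \<Rightarrow> ('a \<Rightarrow> 'a \<Rightarrow> bool) \<Rightarrow> 'a \<Rightarrow> 'a set" where
  "closed_nbhd V E u = {v \<in> V. E u v} \<union> {u}"

definition I_set :: "'a set \<Rightarrow> ('a \<Rightarrow> 'a \<Rightarrow> bool) \<Rightarrow> 'a set \<Rightarrow> 'a \<Rightarrow> 'a set" where
  "I_set V E C u = closed_nbhd V E u \<inter> C"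

definition is_code :: "'a set \<Rightarrow> 'a set \<Rightarrow> bool" where
  "is_code V C \<longleftrightarrow> C \<subseteq> V \<and> C \<noteq> {}"

definition locating_dominating :: "'a set \<Rightarrow> ('a \<Rightarrow> 'a \<Rightarrow> bool) \<Rightarrow> 'a set \<Rightarrow> bool" where
  "locating_dominating V E C \<longleftrightarrow> is_code V C
     \<and> (\<forall>u \<in> V - C. I_set V E C u \<noteq> {})
     \<and> (\<forall>u \<in> V - C. \<forall>v \<in> V - C. u \<noteq> v \<longrightarrow> I_set V E C u \<noteq> I_set V E C v)"

definition solid_locating_dominating :: "'a set \<Rightarrow> ('a \<Rightarrow> 'a \<Rightarrow> bool) \<Rightarrow> 'a set \<Rightarrow> bool" where
  "solid_locating_dominating V E C \<longleftrightarrow> is_code V C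
     \<and> (\<forall>u \<in> V - C. I_set V E C u \<noteq> {})
     \<and> (\<forall>u \<in> V - C. \<forall>v \<in> V - C. u \<noteq> v \<longrightarrow> \<not> (I_set V E C u \<subseteq> I_set V E C v))"

definition gamma_LD :: "'a set \<Rightarrow> ('a \<Rightarrow> 'a \<Rightarrow> bool) \<Rightarrow> nat" where
  "gamma_LD V E = (LEAST k. \<exists>C. locating_dominating V E C \<and> card C = k)"

definition gamma_DLD :: "'a set \<Rightarrow> ('a \<Rightarrow> 'a \<Rightarrow> bool) \<Rightarrow> nat" where
  "gamma_DLD V E = (LEAST k. \<exists>C. solid_locating_dominating V E C \<and> card C = k)"

end

theory Submission
  imports Defs "HOL.Binomial_Plus"
begin

text \<open>
  Necessity: let \<open>C\<close> be an optimal locating-dominating code, \<open>a = |C|\<close> and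
  \<open>k = \<lceil>a/2\<rceil>\<close>. The sets \<open>I(C;u)\<close> of the vertices outside \<open>C\<close> are distinct
  and non-empty; adding to \<open>C\<close> every vertex whose set has size \<open>\<noteq> k\<close> leaves
  only vertices whose sets are distinct \<open>k\<close>-subsets of \<open>C\<close>, hence pairwise
  incomparable, so the result is solid and has at most \<open>a + 2^a - 1 - C(a,k)\<close>
  elements.

  Sufficiency: take the bipartite incidence graph between \<open>{0..<a}\<close> and a
  family \<open>F\<close> of non-empty subsets containing all singletons. Its
  locating-dominating number is \<open>a\<close>. If \<open>M \<subseteq> F\<close> is an antichain and no
  solid code leaves more than \<open>|M|\<close> vertices outside, then
  \<open>{0..<a} \<union> (F - M)\<close> is an optimal solid code, of size \<open>a + |F| - |M|\<close>.
  The set-vertices outside a solid code have pairwise incomparable non-empty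
  traces on the indices inside it, so by Sperner's theorem at most
  \<open>C(a,\<lfloor>a/2\<rfloor>)\<close> vertices lie outside; so for \<open>b - a \<ge> a\<close> let \<open>F\<close>
  consist of \<open>M\<close> = all \<open>\<lceil>a/2\<rceil>\<close>-subsets and \<open>b - a\<close> further sets (the singletons among them). For
  \<open>b - a < a\<close> let \<open>F\<close> consist of \<open>M\<close> = the singletons and a chain of \<open>b - a\<close>
  further sets; then at most \<open>a\<close> vertices lie outside a solid code.
\<close>

subsection \<open>Sperner's theorem\<close>

lemma LYM_inequality:
  assumes "finite X" "\<A> \<subseteq> Pow X" "\<forall>A\<in>\<A>. \<forall>B\<in>\<A>. A \<subseteq> B \<longrightarrow> A = B"
  shows "(\<Sum>A\<in>\<A>. fact (card A) * fact (card X - card A)) \<le> (fact (card X) :: nat)"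
  using assms
proof (induction "card X" arbitrary: X \<A>)
  case 0
  then have "\<A> = {} \<or> \<A> = {{}}" by auto
  with 0 show ?case by auto
next
  case (Suc m X \<A>)
  have fin: "finite \<A>" using Suc.prems(1,2) by (meson finite_Pow_iff finite_subset)
  show ?case
  proof (cases "X \<in> \<A>")
    case True
    then have "\<A> = {X}" using Suc.prems by blast
    then show ?thesis by simp
  next
    case False
    define h :: "'a set \<Rightarrow> nat" where "h A = fact (card A) * fact (m - card A)" for A
    have weight: "fact (card A) * fact (card X - card A) = card (X - A) * h A" if "A \<in> \<A>" for A
    proof -
      have "A \<subset> X" using that False Suc.prems by blast
      then have "card A < card X" "card (X - A) = card X - card A"
        using Suc.prems(1) by (auto simp: psubset_card_mono card_Diff_subset finite_subset)
      then have "card X - card A = Suc (m - card A)" "card (X - A) = Suc (m - card A)"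
        using Suc.hyps(2) by auto
      then show ?thesis unfolding h_def by (simp add: algebra_simps)
    qed
    \<comment> \<open>double counting the pairs \<open>(x, A)\<close> with \<open>x \<notin> A\<close>\<close>
    have "(\<Sum>A\<in>\<A>. fact (card A) * fact (card X - card A)) = (\<Sum>A\<in>\<A>. card (X - A) * h A)"
      using weight by (rule sum.cong[OF refl])
    also have "\<dots> = (\<Sum>A\<in>\<A>. \<Sum>x\<in>X. if x \<notin> A then h A else 0)"
      using Suc.prems(1) by (intro sum.cong refl) (simp add: sum.If_cases Diff_eq Compl_eq)
    also have "\<dots> = (\<Sum>x\<in>X. \<Sum>A\<in>{A\<in>\<A>. x \<notin> A}. h A)"
      by (subst sum.swap) (simp add: fin sum.inter_filter)
    also have "\<dots> \<le> (\<Sum>x\<in>X. fact m)"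
    proof (rule sum_mono)
      fix x assume x: "x \<in> X"
      have m: "m = card (X - {x})" using x Suc by simp
      have "(\<Sum>A\<in>{A\<in>\<A>. x \<notin> A}. fact (card A) * fact (card (X - {x}) - card A))
              \<le> (fact (card (X - {x})) :: nat)"
        by (rule Suc.hyps(1)[OF m]) (use Suc.prems in auto)
      then show "(\<Sum>A\<in>{A\<in>\<A>. x \<notin> A}. h A) \<le> fact m" using m unfolding h_def by simp
    qed
    also have "\<dots> = fact (card X)" using Suc.hyps(2)[symmetric] by simp
    finally show ?thesis .
  qed
qed

lemma card_antichain_le_binomial:
  assumes "finite X" "\<A> \<subseteq> Pow X" "\<forall>A\<in>\<A>. \<forall>B\<in>\<A>. A \<subseteq> B \<longrightarrow> A = B"
  shows "card \<A> \<le> card X choose (card X div 2)"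
proof -
  let ?n = "card X" let ?M = "?n choose (?n div 2)"
  have "card \<A> * fact ?n = (\<Sum>A\<in>\<A>. (fact ?n :: nat))" by simp
  also have "\<dots> \<le> (\<Sum>A\<in>\<A>. fact (card A) * fact (?n - card A) * ?M)"
  proof (rule sum_mono)
    fix A assume "A \<in> \<A>"
    then have "card A \<le> ?n" using assms(1,2) by (auto intro: card_mono)
    then have "fact ?n = fact (card A) * fact (?n - card A) * (?n choose card A)"
      by (simp add: binomial_fact_lemma)
    also have "\<dots> \<le> fact (card A) * fact (?n - card A) * ?M"
      by (intro mult_left_mono binomial_maximum) simp
    finally show "(fact ?n :: nat) \<le> fact (card A) * fact (?n - card A) * ?M" .
  qed
  also have "\<dots> = (\<Sum>A\<in>\<A>. fact (card A) * fact (?n - card A)) * ?M"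
    by (simp add: sum_distrib_right)
  also have "\<dots> \<le> fact ?n * ?M" using LYM_inequality[OF assms] by simp
  finally show ?thesis by simp
qed

definition nonempty_antichain_bound :: "nat \<Rightarrow> nat" where
  "nonempty_antichain_bound m = (if m = 0 then 0 else m choose (m div 2))"

lemma card_nonempty_antichain_le:
  assumes "finite R" "\<A> \<subseteq> Pow R" "{} \<notin> \<A>" "\<forall>A\<in>\<A>. \<forall>B\<in>\<A>. A \<subseteq> B \<longrightarrow> A = B"
  shows "card \<A> \<le> nonempty_antichain_bound (card R)"
proof (cases "R = {}")
  case True
  then have "\<A> = {}" using assms by auto
  then show ?thesis by simp
next
  case False
  then show ?thesis
    using card_antichain_le_binomial[OF assms(1,2,4)] assms(1) by (simp add: nonempty_antichain_bound_def)
qed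

lemma nonempty_antichain_bound_Suc:
  "nonempty_antichain_bound m + 1 \<le> nonempty_antichain_bound (Suc m)"
proof (cases "m = 0")
  case True
  then show ?thesis by (simp add: nonempty_antichain_bound_def)
next
  case False
  obtain j where j: "m choose j \<ge> 1" "Suc m choose (Suc m div 2) = (m choose j) + (m choose (m div 2))"
  proof (cases "even m")
    case True
    then obtain j where "m div 2 = Suc j" "Suc m div 2 = m div 2"
      using False by (metis dvd_mult_div_cancel even_Suc_div_two mult_0_right not0_implies_Suc)
    then show ?thesis by (intro that[of j]) (simp_all add: Suc_leI)
  next
    case odd: False
    then have "Suc m div 2 = Suc (m div 2)" "Suc (m div 2) \<le> m" using False by presburger+
    then show ?thesis by (intro that[of "Suc (m div 2)"]) (simp_all add: Suc_leI)
  qed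
  with False show ?thesis by (simp add: nonempty_antichain_bound_def)
qed

lemma nonempty_antichain_bound_add:
  "nonempty_antichain_bound r + d \<le> nonempty_antichain_bound (r + d)"
  by (induction d) (use nonempty_antichain_bound_Suc in \<open>auto intro: le_trans\<close>)

lemma Least_card_le: "P C \<Longrightarrow> (LEAST k. \<exists>C. P C \<and> card C = k) \<le> card C"
  by (rule Least_le) blast

lemma Least_card_ex: "P C \<Longrightarrow> \<exists>D. P D \<and> card D = (LEAST k. \<exists>C. P C \<and> card C = k)"
  using LeastI_ex[of "\<lambda>k. \<exists>C. P C \<and> card C = k"] by blast

lemma Least_card_eqI:
  "P C \<Longrightarrow> card C = k \<Longrightarrow> (\<And>D. P D \<Longrightarrow> k \<le> card D) \<Longrightarrow> (LEAST k. \<exists>C. P C \<and> card C = k) = k"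
  by (rule Least_equality) auto

lemma Least_card_image:
  assumes f: "inj_on f V"
    and P: "\<And>C. P C \<Longrightarrow> C \<subseteq> V" and Q: "\<And>C. Q C \<Longrightarrow> C \<subseteq> f ` V"
    and PQ: "\<And>C. C \<subseteq> V \<Longrightarrow> Q (f ` C) \<longleftrightarrow> P C"
  shows "(LEAST k. \<exists>C. Q C \<and> card C = k) = (LEAST k. \<exists>C. P C \<and> card C = k)"
proof -
  have card_f: "card (f ` C) = card C" if "C \<subseteq> V" for C
    using that f by (meson card_image inj_on_subset)
  have "(\<exists>C. Q C \<and> card C = k) \<longleftrightarrow> (\<exists>C. P C \<and> card C = k)" for k
  proof
    assume "\<exists>C'. Q C' \<and> card C' = k"
    then obtain C' where C': "Q C'" "card C' = k" by blast
    then obtain C where "C \<subseteq> V" "C' = f ` C" using Q by (meson subset_image_iff)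
    then show "\<exists>C. P C \<and> card C = k" using C' PQ card_f by metis
  next
    assume "\<exists>C. P C \<and> card C = k"
    then show "\<exists>C. Q C \<and> card C = k" using P PQ card_f by metis
  qed
  then show ?thesis by simp
qed

lemma locating_dominating_subset: "locating_dominating V E C \<Longrightarrow> C \<subseteq> V"
  and solid_locating_dominating_subset: "solid_locating_dominating V E C \<Longrightarrow> C \<subseteq> V"
  unfolding locating_dominating_def solid_locating_dominating_def is_code_def by auto

lemma locating_dominating_if_solid:
  "solid_locating_dominating V E C \<Longrightarrow> locating_dominating V E C"
  unfolding solid_locating_dominating_def locating_dominating_def by blast

lemma locating_dominating_vertices: "V \<noteq> {} \<Longrightarrow> locating_dominating V E V"
  and solid_locating_dominating_vertices: "V \<noteq> {} \<Longrightarrow> solid_locating_dominating V E V"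
  by (simp_all add: locating_dominating_def solid_locating_dominating_def is_code_def)

lemma gamma_LD_le_gamma_DLD:
  assumes "V \<noteq> {}"
  shows "gamma_LD V E \<le> gamma_DLD V E"
proof -
  obtain D where D: "solid_locating_dominating V E D" "card D = gamma_DLD V E"
    using Least_card_ex[of "solid_locating_dominating V E", OF solid_locating_dominating_vertices[OF assms]]
    unfolding gamma_DLD_def by blast
  have "gamma_LD V E \<le> card D"
    unfolding gamma_LD_def by (rule Least_card_le) (rule locating_dominating_if_solid[OF D(1)])
  with D(2) show ?thesis by simp
qed

subsection \<open>Relabelling vertices\<close>

definition map_edges :: "('a \<Rightarrow> 'b) \<Rightarrow> 'a set \<Rightarrow> ('a \<Rightarrow> 'a \<Rightarrow> bool) \<Rightarrow> 'b \<Rightarrow> 'b \<Rightarrow> bool" where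
  "map_edges f V E u v \<longleftrightarrow> (\<exists>x\<in>V. \<exists>y\<in>V. u = f x \<and> v = f y \<and> E x y)"

context
  fixes V :: "'a set" and E and f :: "'a \<Rightarrow> 'b"
  assumes G: "simple_graph V E" and f: "inj_on f V"
begin

lemma simple_graph_map: "simple_graph (f ` V) (map_edges f V E)"
  using G f unfolding simple_graph_def map_edges_def inj_on_def by blast

lemma I_set_map:
  assumes "u \<in> V" "C \<subseteq> V"
  shows "I_set (f ` V) (map_edges f V E) (f ` C) (f u) = f ` I_set V E C u"
proof -
  have "closed_nbhd (f ` V) (map_edges f V E) (f u) = f ` closed_nbhd V E u"
    using G f assms(1) unfolding simple_graph_def map_edges_def inj_on_def closed_nbhd_def by blast
  moreover have "closed_nbhd V E u \<subseteq> V" using assms(1) unfolding closed_nbhd_def by auto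
  ultimately show ?thesis unfolding I_set_def using f assms(2) inj_on_image_Int by metis
qed

lemma locating_dominating_map:
  assumes C: "C \<subseteq> V"
  shows "locating_dominating (f ` V) (map_edges f V E) (f ` C) \<longleftrightarrow> locating_dominating V E C"
proof -
  have IV: "I_set V E C u \<subseteq> V" for u unfolding I_set_def using C by auto
  have "f ` V - f ` C = f ` (V - C)" using f C by (simp add: inj_on_image_set_diff)
  then show ?thesis unfolding locating_dominating_def is_code_def
    using C f I_set_map[OF _ C] inj_on_image_eq_iff[OF f IV IV]
    by (auto simp: inj_on_image_eq_iff inj_on_eq_iff)
qed

lemma solid_locating_dominating_map:
  assumes C: "C \<subseteq> V"
  shows "solid_locating_dominating (f ` V) (map_edges f V E) (f ` C) \<longleftrightarrow> solid_locating_dominating V E C"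
proof -
  have IV: "I_set V E C u \<subseteq> V" for u unfolding I_set_def using C by auto
  have sub_iff: "f ` A \<subseteq> f ` B \<longleftrightarrow> A \<subseteq> B" if "A \<subseteq> V" "B \<subseteq> V" for A B
    using that f by (auto simp: inj_on_image_mem_iff) (meson inj_on_image_mem_iff subsetD image_eqI)
  have "f ` V - f ` C = f ` (V - C)" using f C by (simp add: inj_on_image_set_diff)
  then show ?thesis unfolding solid_locating_dominating_def is_code_def
    using C f I_set_map[OF _ C] sub_iff[OF IV IV] by (auto simp: sub_iff inj_on_eq_iff)
qed

lemma gamma_LD_map: "gamma_LD (f ` V) (map_edges f V E) = gamma_LD V E"
  unfolding gamma_LD_def
  by (rule Least_card_image[OF f]) (auto simp: locating_dominating_subset locating_dominating_map)

lemma gamma_DLD_map: "gamma_DLD (f ` V) (map_edges f V E) = gamma_DLD V E"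
  unfolding gamma_DLD_def
  by (rule Least_card_image[OF f]) (auto simp: solid_locating_dominating_subset solid_locating_dominating_map)

end

lemma graph_on_nat:
  fixes V :: "'a set"
  assumes "simple_graph V E" "V \<noteq> {}"
  shows "\<exists>(V' :: nat set) E'. simple_graph V' E' \<and> V' \<noteq> {} \<and>
           gamma_LD V' E' = gamma_LD V E \<and> gamma_DLD V' E' = gamma_DLD V E"
proof -
  obtain f :: "'a \<Rightarrow> nat" where f: "inj_on f V"
    using assms(1) finite_imp_inj_to_nat_seg[of V] unfolding simple_graph_def by auto
  show ?thesis
    using simple_graph_map[OF assms(1) f] gamma_LD_map[OF assms(1) f] gamma_DLD_map[OF assms(1) f] assms(2)
    by (intro exI[of _ "f ` V"] exI[of _ "map_edges f V E"]) auto
qed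

subsection \<open>The upper bound\<close>

lemma card_nonempty_subsets_card_neq:
  assumes "finite C" "k \<ge> 1"
  shows "card {S. S \<subseteq> C \<and> S \<noteq> {} \<and> card S \<noteq> k} + 1 + (card C choose k) = 2 ^ card C"
proof -
  let ?Q = "{S. S \<subseteq> C \<and> S \<noteq> {} \<and> card S \<noteq> k}"
  let ?L = "{S. S \<subseteq> C \<and> card S = k}"
  have P: "Pow C = (?Q \<union> {{}}) \<union> ?L" using assms by auto
  have "card (Pow C) = card (?Q \<union> {{}}) + card ?L"
    unfolding P by (rule card_Un_disjoint) (use assms P in \<open>auto intro: finite_subset\<close>)
  also have "card (?Q \<union> {{}}) = card ?Q + 1"
    using assms by (subst card_Un_disjoint) auto
  finally show ?thesis using n_subsets[OF assms(1)] card_Pow[OF assms(1)] by simp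
qed

lemma solid_locating_dominating_add_uneven:
  assumes C: "locating_dominating V E C" and k: "k > 0"
  shows "solid_locating_dominating V E (C \<union> {u \<in> V - C. card (I_set V E C u) \<noteq> k})"
    (is "solid_locating_dominating V E ?D")
  unfolding solid_locating_dominating_def is_code_def
proof (intro conjI ballI impI)
  have restrict: "I_set V E ?D u \<inter> C = I_set V E C u" for u unfolding I_set_def by auto
  show "?D \<subseteq> V" "?D \<noteq> {}" using C unfolding locating_dominating_def is_code_def by auto
  show "I_set V E ?D u \<noteq> {}" if "u \<in> V - ?D" for u
    using that C restrict unfolding locating_dominating_def by blast
  fix u v assume u: "u \<in> V - ?D" and v: "v \<in> V - ?D" and "u \<noteq> v"
  then have "I_set V E C u \<noteq> I_set V E C v"
    using C unfolding locating_dominating_def by blast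
  moreover have "card (I_set V E C u) = k" "card (I_set V E C v) = k" using u v by auto
  ultimately have "\<not> I_set V E C u \<subseteq> I_set V E C v"
    using k by (metis card_ge_0_finite card_subset_eq)
  then show "\<not> I_set V E ?D u \<subseteq> I_set V E ?D v" using restrict by blast
qed

lemma gamma_DLD_upper_bound:
  assumes G: "simple_graph V E" "V \<noteq> {}" and k: "k > 0"
  shows "gamma_DLD V E + 1 + (gamma_LD V E choose k) \<le> gamma_LD V E + 2 ^ gamma_LD V E"
proof -
  obtain C where C: "locating_dominating V E C" "card C = gamma_LD V E"
    using Least_card_ex[of "locating_dominating V E", OF locating_dominating_vertices[OF G(2)]]
    unfolding gamma_LD_def by blast
  define W where "W = {u \<in> V - C. card (I_set V E C u) \<noteq> k}"
  have fin: "finite C" using G(1) locating_dominating_subset[OF C(1)]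
    unfolding simple_graph_def by (blast intro: finite_subset)
  have "card W \<le> card {S. S \<subseteq> C \<and> S \<noteq> {} \<and> card S \<noteq> k}"
  proof (rule card_inj_on_le)
    show "inj_on (I_set V E C) W" "I_set V E C ` W \<subseteq> {S. S \<subseteq> C \<and> S \<noteq> {} \<and> card S \<noteq> k}"
      using C(1) unfolding W_def inj_on_def locating_dominating_def I_set_def by auto
  qed (use fin in simp)
  then have "card W + 1 + (gamma_LD V E choose k) \<le> 2 ^ gamma_LD V E"
    using card_nonempty_subsets_card_neq[OF fin, of k] k C(2) by simp
  moreover have "gamma_DLD V E \<le> card (C \<union> W)"
    unfolding gamma_DLD_def W_def
    by (rule Least_card_le) (rule solid_locating_dominating_add_uneven[OF C(1) k])
  moreover have "card (C \<union> W) \<le> gamma_LD V E + card W" using C(2) card_Un_le by metis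
  ultimately show ?thesis by linarith
qed

subsection \<open>Incidence graphs of set families\<close>

definition incidence_vertices :: "nat \<Rightarrow> nat set set \<Rightarrow> (nat + nat set) set" where
  "incidence_vertices a F = Inl ` {..<a} \<union> Inr ` F"

definition incidence_edge :: "nat \<Rightarrow> nat set set \<Rightarrow> (nat + nat set) \<Rightarrow> (nat + nat set) \<Rightarrow> bool" where
  "incidence_edge a F x y \<longleftrightarrow>
     (\<exists>i S. i < a \<and> S \<in> F \<and> i \<in> S \<and> (x = Inl i \<and> y = Inr S \<or> x = Inr S \<and> y = Inl i))"

locale incidence_family =
  fixes a :: nat and F :: "nat set set"
  assumes finite_family: "finite F"
    and family_subset: "S \<in> F \<Longrightarrow> S \<subseteq> {..<a}"
    and family_nonempty: "S \<in> F \<Longrightarrow> S \<noteq> {}"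
    and singleton_mem: "i < a \<Longrightarrow> {i} \<in> F"
begin

abbreviation "V \<equiv> incidence_vertices a F"
abbreviation "E \<equiv> incidence_edge a F"

lemma simple_graph_incidence: "simple_graph V E"
  unfolding simple_graph_def incidence_vertices_def incidence_edge_def using finite_family by auto

lemma incidence_vertices_nonempty: "a > 0 \<Longrightarrow> V \<noteq> {}"
  unfolding incidence_vertices_def by auto

lemma card_incidence_vertices: "card V = a + card F"
  unfolding incidence_vertices_def
  by (subst card_Un_disjoint) (auto simp: finite_family card_image)

lemma I_set_Inr: "S \<in> F \<Longrightarrow> Inr S \<notin> D \<Longrightarrow> I_set V E D (Inr S) = Inl ` {i\<in>S. Inl i \<in> D}"
  unfolding I_set_def closed_nbhd_def incidence_vertices_def incidence_edge_def
  using family_subset by fastforce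

lemma Inr_singleton_mem:
  assumes dom: "\<forall>u\<in>V - D. I_set V E D u \<noteq> {}" and "i < a" "Inl i \<notin> D"
  shows "Inr {i} \<in> D"
proof (rule ccontr)
  assume "Inr {i} \<notin> D"
  then have "Inr {i} \<in> V - D" "I_set V E D (Inr {i}) = {}"
    using assms singleton_mem I_set_Inr unfolding incidence_vertices_def by auto
  then show False using dom by blast
qed

lemma card_dominating_ge:
  assumes "D \<subseteq> V" "\<forall>u\<in>V - D. I_set V E D u \<noteq> {}"
  shows "a \<le> card D"
proof -
  define h where "h i = (if Inl i \<in> D then Inl i else Inr {i})" for i :: nat
  have "card (h ` {..<a}) \<le> card D"
    using assms Inr_singleton_mem simple_graph_incidence
    by (intro card_mono) (auto simp: h_def simple_graph_def intro: finite_subset)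
  moreover have "inj_on h {..<a}" unfolding inj_on_def h_def by auto
  ultimately show ?thesis by (simp add: card_image)
qed

lemma locating_dominating_ground: "a > 0 \<Longrightarrow> locating_dominating V E (Inl ` {..<a})"
proof -
  have I: "I_set V E (Inl ` {..<a}) (Inr S) = Inl ` S" if "S \<in> F" for S
    using family_subset[OF that] by (subst I_set_Inr[OF that]) auto
  assume "a > 0"
  then have code: "Inl ` {..<a} \<subseteq> V" "Inl ` {..<a} \<noteq> {}"
    unfolding incidence_vertices_def by auto
  have outside: "V - Inl ` {..<a} = Inr ` F" unfolding incidence_vertices_def by auto
  show ?thesis
    unfolding locating_dominating_def is_code_def outside
    using code family_nonempty by (auto simp: I inj_image_eq_iff)
qed

lemma gamma_LD_incidence: "a > 0 \<Longrightarrow> gamma_LD V E = a"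
  unfolding gamma_LD_def
  by (rule Least_card_eqI[of "locating_dominating V E", OF locating_dominating_ground])
    (auto simp: card_image locating_dominating_def is_code_def intro: card_dominating_ge)

lemma solid_trace_antichain:
  assumes D: "solid_locating_dominating V E D"
    and ST: "S \<in> F" "T \<in> F" "Inr S \<notin> D" "Inr T \<notin> D"
    and sub: "{i\<in>S. Inl i \<in> D} \<subseteq> {i\<in>T. Inl i \<in> D}"
  shows "S = T"
proof -
  have "Inr S \<in> V - D" "Inr T \<in> V - D" using ST unfolding incidence_vertices_def by auto
  moreover have "I_set V E D (Inr S) \<subseteq> I_set V E D (Inr T)"
    using sub by (simp add: I_set_Inr ST image_mono)
  ultimately show ?thesis using D unfolding solid_locating_dominating_def by blast
qed

lemma card_complement_solid_le:
  assumes D: "solid_locating_dominating V E D"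
  shows "card (V - D) \<le> a choose (a div 2)"
proof -
  define R where "R = {i. i < a \<and> Inl i \<in> D}"
  define U where "U = {S \<in> F. Inr S \<notin> D}"
  have finR: "finite R" unfolding R_def by simp
  have trace: "{i\<in>S. Inl i \<in> D} = S \<inter> R" if "S \<in> F" for S
    using family_subset[OF that] unfolding R_def by auto
  have "inj_on (\<lambda>S. S \<inter> R) U"
    using solid_trace_antichain[OF D] trace unfolding U_def inj_on_def by (metis (no_types, lifting) mem_Collect_eq order_refl)
  then have "card U = card ((\<lambda>S. S \<inter> R) ` U)" by (simp add: card_image)
  also have "\<dots> \<le> nonempty_antichain_bound (card R)"
  proof (rule card_nonempty_antichain_le[OF finR])
    have "S \<inter> R \<noteq> {}" if "S \<in> U" for S
    proof -
      have "I_set V E D (Inr S) \<noteq> {}"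
        using D that unfolding solid_locating_dominating_def U_def incidence_vertices_def by auto
      then show ?thesis using that I_set_Inr trace unfolding U_def by auto
    qed
    then show "{} \<notin> (\<lambda>S. S \<inter> R) ` U" by force
    show "\<forall>A\<in>(\<lambda>S. S \<inter> R) ` U. \<forall>B\<in>(\<lambda>S. S \<inter> R) ` U. A \<subseteq> B \<longrightarrow> A = B"
      using solid_trace_antichain[OF D] trace unfolding U_def by auto
  qed auto
  finally have U: "card U \<le> nonempty_antichain_bound (card R)" .
  have R: "R \<subseteq> {..<a}" unfolding R_def by auto
  have "V - D = Inl ` ({..<a} - R) \<union> Inr ` U"
    unfolding incidence_vertices_def R_def U_def by auto
  then have "card (V - D) \<le> card ({..<a} - R) + card U"
    by (metis card_Un_le card_image inj_Inl inj_Inr inj_on_subset subset_UNIV)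
  also have "\<dots> \<le> (a - card R) + nonempty_antichain_bound (card R)"
    using U R finR by (simp add: card_Diff_subset)
  also have "\<dots> \<le> nonempty_antichain_bound a"
    using nonempty_antichain_bound_add[of "card R" "a - card R"] R by (simp add: card_mono[of "{..<a}", simplified])
  finally show ?thesis by (simp add: nonempty_antichain_bound_def split: if_splits)
qed

lemma solid_locating_dominating_antichain_complement:
  assumes "a > 0" "M \<subseteq> F" and M: "\<forall>S\<in>M. \<forall>T\<in>M. S \<subseteq> T \<longrightarrow> S = T"
  shows "solid_locating_dominating V E (Inl ` {..<a} \<union> Inr ` (F - M))"
proof -
  have I: "I_set V E (Inl ` {..<a} \<union> Inr ` (F - M)) (Inr S) = Inl ` S" if "S \<in> M" for S
  proof -
    have "S \<in> F" "S \<subseteq> {..<a}" using that assms(2) family_subset by auto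
    then show ?thesis using that by (subst I_set_Inr) auto
  qed
  have code: "Inl ` {..<a} \<union> Inr ` (F - M) \<subseteq> V" "Inl ` {..<a} \<union> Inr ` (F - M) \<noteq> {}"
    using assms(1) unfolding incidence_vertices_def by auto
  have outside: "V - (Inl ` {..<a} \<union> Inr ` (F - M)) = Inr ` M"
    using assms(2) unfolding incidence_vertices_def by auto
  show ?thesis
    unfolding solid_locating_dominating_def is_code_def outside
    using code assms(2) family_nonempty M by (auto simp: I inj_image_subset_iff)
qed

lemma gamma_DLD_incidence:
  assumes "a > 0" "M \<subseteq> F" "\<forall>S\<in>M. \<forall>T\<in>M. S \<subseteq> T \<longrightarrow> S = T"
    and bound: "\<And>D. solid_locating_dominating V E D \<Longrightarrow> card (V - D) \<le> card M"
  shows "gamma_DLD V E + card M = card V"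
proof -
  have fin: "finite V" using simple_graph_incidence unfolding simple_graph_def by simp
  have "card (Inl ` {..<a} \<union> Inr ` (F - M)) = card V - card M"
    using assms(2) finite_family card_incidence_vertices card_mono[OF finite_family assms(2)]
    by (subst card_Un_disjoint) (auto simp: card_image card_Diff_subset finite_subset)
  moreover have "card V - card M \<le> card D" if "solid_locating_dominating V E D" for D
    using bound[OF that] solid_locating_dominating_subset[OF that] fin
    by (simp add: card_Diff_subset finite_subset)
  ultimately have "gamma_DLD V E = card V - card M"
    unfolding gamma_DLD_def
    by (intro Least_card_eqI[of "solid_locating_dominating V E",
          OF solid_locating_dominating_antichain_complement[OF assms(1-3)]])
  moreover have "card M \<le> card V"
    using card_mono[OF finite_family assms(2)] card_incidence_vertices by simp
  ultimately show ?thesis by simp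
qed

lemma Inr_singleton_mem_solid:
  assumes D: "solid_locating_dominating V E D"
    and S: "S \<in> F" "Inr S \<notin> D" "card S \<noteq> 1" and i: "i \<in> S" "Inl i \<in> D"
  shows "Inr {i} \<in> D"
proof (rule ccontr)
  assume "Inr {i} \<notin> D"
  moreover have "i < a" using i S family_subset by auto
  ultimately have "{i} = S" using solid_trace_antichain[OF D singleton_mem S(1)] S(2) i by auto
  with S(3) show False by auto
qed

text \<open>If the non-singleton members of \<open>F\<close> form a chain, each vertex outside a
  solid code is charged to an index \<open>i\<close>: \<open>Inl i\<close> and \<open>Inr {i}\<close> are charged to
  \<open>i\<close>, and the (unique) chain vertex outside the code to an index \<open>i\<close> in its
  set such that both \<open>Inl i\<close> and \<open>Inr {i}\<close> are in the code.\<close>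
lemma card_complement_solid_le_chain:
  assumes chain: "\<And>S T. S \<in> F \<Longrightarrow> T \<in> F \<Longrightarrow> card S \<noteq> 1 \<Longrightarrow> card T \<noteq> 1 \<Longrightarrow> S \<subseteq> T \<or> T \<subseteq> S"
    and D: "solid_locating_dominating V E D"
  shows "card (V - D) \<le> a"
proof -
  have dom: "\<forall>u\<in>V - D. I_set V E D u \<noteq> {}" using D unfolding solid_locating_dominating_def by blast
  define charged where "charged x i \<longleftrightarrow>
      (x = Inl i \<and> Inr {i} \<in> D) \<or> (x = Inr {i} \<and> Inl i \<in> D) \<or>
      (\<exists>S\<in>F. card S \<noteq> 1 \<and> x = Inr S \<and> Inl i \<in> D \<and> Inr {i} \<in> D)" for x i
  have chain_unique: "S = T" if "S \<in> F" "T \<in> F" "card S \<noteq> 1" "card T \<noteq> 1" "Inr S \<notin> D" "Inr T \<notin> D" for S T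
    using chain[OF that(1-4)] solid_trace_antichain[OF D] that by blast
  have "\<exists>i<a. charged x i" if x: "x \<in> V - D" for x
  proof -
    consider (Inl) i where "i < a" "x = Inl i" | (Inr) S where "S \<in> F" "x = Inr S"
      using x unfolding incidence_vertices_def by auto
    then show ?thesis
    proof cases
      case Inl
      then show ?thesis using Inr_singleton_mem[OF dom] x unfolding charged_def by auto
    next
      case Inr
      then have S: "Inr S \<notin> D" "S \<subseteq> {..<a}" using x family_subset by auto
      moreover have "I_set V E D (Inr S) \<noteq> {}" using dom x Inr by auto
      ultimately obtain i where i: "i \<in> S" "Inl i \<in> D" using I_set_Inr[OF Inr(1)] by auto
      show ?thesis
      proof (cases "card S = 1")
        case True
        then have "S = {i}" using i by (auto simp: card_1_singleton_iff)
        then show ?thesis using Inr i S unfolding charged_def by auto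
      next
        case False
        then show ?thesis
          using Inr_singleton_mem_solid[OF D Inr(1) S(1) False i] Inr i S unfolding charged_def by auto
      qed
    qed
  qed
  then obtain g where g: "\<And>x. x \<in> V - D \<Longrightarrow> g x < a \<and> charged x (g x)" by metis
  have "inj_on g (V - D)"
  proof (rule inj_onI)
    fix x y assume x: "x \<in> V - D" and y: "y \<in> V - D" and "g x = g y"
    then have "charged x (g x)" "charged y (g x)" using g by metis+
    then show "x = y" using x y chain_unique unfolding charged_def by auto
  qed
  then have "card (V - D) \<le> card {..<a}" using g by (intro card_inj_on_le) auto
  then show ?thesis by simp
qed

end

subsection \<open>Realizing the admissible pairs\<close>

lemma realizable_small_gap:
  assumes "a > 0" "t < a"
  shows "\<exists>(V :: (nat + nat set) set) E. simple_graph V E \<and> V \<noteq> {} \<and>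
           gamma_LD V E = a \<and> gamma_DLD V E = a + t"
proof -
  define Sing where "Sing = (\<lambda>i. {i}) ` {..<a}"
  define Chain where "Chain = (\<lambda>j. {0..j}) ` {1..t}"
  have card_Chain: "S \<in> Chain \<Longrightarrow> card S \<ge> 2" for S unfolding Chain_def by auto
  have "Sing \<inter> Chain = {}" unfolding Sing_def using card_Chain by fastforce
  moreover have "card Sing = a" "card Chain = t"
    unfolding Sing_def Chain_def by (subst card_image; auto simp: inj_on_def)+
  ultimately have card: "card (Sing \<union> Chain) = a + t"
    unfolding Sing_def Chain_def by (simp add: card_Un_disjoint)
  interpret incidence_family a "Sing \<union> Chain"
    using assms unfolding Sing_def Chain_def by unfold_locales auto
  have chain: "S \<subseteq> T \<or> T \<subseteq> S"
    if "S \<in> Sing \<union> Chain" "T \<in> Sing \<union> Chain" "card S \<noteq> 1" "card T \<noteq> 1" for S T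
    using that unfolding Sing_def Chain_def by (auto simp: nle_le)
  have "card (V - D) \<le> card Sing" if "solid_locating_dominating V E D" for D
    using card_complement_solid_le_chain[OF chain that] \<open>card Sing = a\<close> by simp
  moreover have "\<forall>S\<in>Sing. \<forall>T\<in>Sing. S \<subseteq> T \<longrightarrow> S = T" unfolding Sing_def by auto
  ultimately have "gamma_DLD V E + card Sing = card V"
    by (intro gamma_DLD_incidence assms(1)) auto
  then have "gamma_DLD V E = a + t" using card_incidence_vertices card \<open>card Sing = a\<close> by simp
  then show ?thesis
    using simple_graph_incidence incidence_vertices_nonempty gamma_LD_incidence assms(1) by blast
qed

lemma realizable_large_gap:
  assumes "a > 0" "a \<le> t" and bound: "t + 1 + (a choose ((a + 1) div 2)) \<le> 2 ^ a"
  shows "\<exists>(V :: (nat + nat set) set) E. simple_graph V E \<and> V \<noteq> {} \<and>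
           gamma_LD V E = a \<and> gamma_DLD V E = a + t"
proof -
  define k where "k = (a + 1) div 2"
  have "a \<ge> 3"
  proof (rule ccontr)
    assume "\<not> a \<ge> 3"
    then have "a = 1 \<or> a = 2" using assms(1) by linarith
    then show False using assms by auto
  qed
  then have k: "k \<ge> 2" unfolding k_def by simp
  define Sing where "Sing = (\<lambda>i. {i}) ` {..<a}"
  define Mid where "Mid = {S. S \<subseteq> {..<a} \<and> card S = k}"
  define Q where "Q = {S. S \<subseteq> {..<a} \<and> S \<noteq> {} \<and> card S \<noteq> k}"
  have card_Sing: "card Sing = a" unfolding Sing_def by (simp add: card_image)
  have "a - a div 2 = k" unfolding k_def by presburger
  then have central: "a choose k = a choose (a div 2)"
    using binomial_symmetric[of "a div 2" a] by simp
  then have card_Mid: "card Mid = a choose (a div 2)"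
    unfolding Mid_def using n_subsets[of "{..<a}" k] by simp
  have Sing_Q: "Sing \<subseteq> Q" unfolding Sing_def Q_def using k by auto
  have "card Q + 1 + card Mid = 2 ^ a"
    using card_nonempty_subsets_card_neq[of "{..<a}" k] k central card_Mid unfolding Q_def by simp
  moreover have finQ: "finite Q" unfolding Q_def by simp
  then have "card (Q - Sing) = card Q - a"
    using Sing_Q card_Sing by (simp add: card_Diff_subset finite_subset)
  ultimately have "t - a \<le> card (Q - Sing)"
    using bound central card_Mid unfolding k_def by linarith
  then obtain X where X: "X \<subseteq> Q - Sing" "card X = t - a"
    by (meson obtain_subset_with_card_n)
  have fin: "finite Sing" "finite X" "finite Mid"
    using finite_subset[OF X(1) finite_Diff[OF finQ]] unfolding Sing_def Mid_def by auto
  have "Sing \<inter> X = {}" "(Sing \<union> X) \<inter> Mid = {}"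
    using X k unfolding Q_def Mid_def Sing_def by auto
  then have "card (Sing \<union> X \<union> Mid) = a + (t - a) + card Mid"
    using fin X(2) card_Sing by (simp add: card_Un_disjoint)
  then have card: "card (Sing \<union> X \<union> Mid) = t + card Mid" using assms(2) by simp
  interpret incidence_family a "Sing \<union> X \<union> Mid"
    using assms(1) k X unfolding Sing_def Q_def Mid_def by unfold_locales (auto simp: finite_subset)
  have "\<forall>S\<in>Mid. \<forall>T\<in>Mid. S \<subseteq> T \<longrightarrow> S = T"
    unfolding Mid_def by (metis (mono_tags, lifting) card_subset_eq finite_lessThan finite_subset mem_Collect_eq)
  then have "gamma_DLD V E + card Mid = card V"
    using card_complement_solid_le card_Mid by (intro gamma_DLD_incidence assms(1)) auto
  then have "gamma_DLD V E = a + t" using card_incidence_vertices card by simp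
  then show ?thesis
    using simple_graph_incidence incidence_vertices_nonempty gamma_LD_incidence assms(1) by blast
qed

lemma LD_DLD_realizable_iff:
  assumes "a > 0"
  shows "(\<exists>(V :: nat set) E. simple_graph V E \<and> V \<noteq> {} \<and> gamma_LD V E = a \<and> gamma_DLD V E = b)
     \<longleftrightarrow> a \<le> b \<and> b + 1 + (a choose ((a + 1) div 2)) \<le> a + 2 ^ a"
proof
  assume "\<exists>(V :: nat set) E. simple_graph V E \<and> V \<noteq> {} \<and> gamma_LD V E = a \<and> gamma_DLD V E = b"
  then obtain V :: "nat set" and E
    where G: "simple_graph V E" "V \<noteq> {}" "gamma_LD V E = a" "gamma_DLD V E = b" by blast
  have "(a + 1) div 2 > 0" using assms by simp
  then show "a \<le> b \<and> b + 1 + (a choose ((a + 1) div 2)) \<le> a + 2 ^ a"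
    using gamma_LD_le_gamma_DLD[OF G(2)] gamma_DLD_upper_bound[OF G(1,2)] G(3,4) by auto
next
  assume ab: "a \<le> b \<and> b + 1 + (a choose ((a + 1) div 2)) \<le> a + 2 ^ a"
  have "\<exists>(V :: (nat + nat set) set) E. simple_graph V E \<and> V \<noteq> {} \<and>
               gamma_LD V E = a \<and> gamma_DLD V E = a + (b - a)"
  proof (cases "b - a < a")
    case True
    then show ?thesis by (rule realizable_small_gap[OF assms])
  next
    case False
    then show ?thesis using ab by (intro realizable_large_gap[OF assms]) auto
  qed
  then obtain V :: "(nat + nat set) set" and E
    where "simple_graph V E" "V \<noteq> {}" "gamma_LD V E = a" "gamma_DLD V E = b"
    using ab by auto
  then show "\<exists>(V :: nat set) E. simple_graph V E \<and> V \<noteq> {} \<and> gamma_LD V E = a \<and> gamma_DLD V E = b"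
    using graph_on_nat[of V E] by auto
qed

theorem mainTheorem20:
  fixes a b :: nat
  assumes "a > 0" and "b > 0"
  shows "(\<exists>(V :: nat set) E. simple_graph V E \<and> V \<noteq> {} \<and>
             gamma_LD V E = a \<and> gamma_DLD V E = b)
         \<longleftrightarrow> (0 \<le> int b - int a \<and>
              int b - int a \<le> 2 ^ a - 1 - int (a choose ((a + 1) div 2)))"
proof -
  have "int (2 ^ a) = 2 ^ a" by simp
  then show ?thesis unfolding LD_DLD_realizable_iff[OF assms(1)] by linarith
qed

end
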